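(* Let $\mathcal{X}$ be a domain, $\mathcal{Y}=\{\pm1\}$, $\mathcal{F}$ a hypothesis class of functions $\mathcal{X}\to\mathcal{Y}$ with finite VC dimension $d$, and $\mathcal{P}$ an unknown distribution on $\mathcal{X}\times\mathcal{Y}$. Let $S_m$ be a sample of size $m$ drawn i.i.d. from $\mathcal{P}$, let $0<\delta<1$, and let $G$ be the low-error set computed by ILESS on input $(S_m,\delta,\mathcal{F},d)$. Suppose the event $\mathcal{E}$ occurred. Then every true risk minimizer $f^*\in\mathcal{F}$ belongs to $G$; consequently the selective classifier output by ILESS is pointwise-competitive (and this holds with probability at least $1-\delta$).
   Context: Risks: for $f\in\mathcal{F}$, $R(f)=\Pr_{(X,Y)\sim\mathcal{P}}[f(X)\neq Y]$; for a sample $S=((x_1,y_1),\dots,(x_m,y_m))$, $\hat R(f,S)=\frac1m\sum_{i=1}^m\mathbb{1}\{f(x_i)\neq y_i\}$. An ERM $\hat f$ is any minimizer of $\hat R(\cdot,S_m)$ over $\mathcal{F}$; a true risk minimizer $f^*$ is any minimizer of $R$ over $\mathcal{F}$ (assumed to exist, possibly not unique). Slack functions: $A=A(m,\delta)=4d\ln\frac{16me}{d\delta}$; $\hat\sigma_{R-\hat R}(m,\delta,d,\hat r)=\frac{A}{m}+\sqrt{\frac{A}{m}\hat r}$, $\bar\sigma_{R-\hat R}(m,\delta,d,r)=\sqrt{\frac{A}{m}r}$, $\bar\sigma_{\hat R-R}(m,\delta,d,r)=\frac{A}{m}+\sqrt{\frac{A}{m}r}$, $\hat\sigma_{\hat R-R}(m,\delta,d,\hat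 r)=\sqrt{\frac{A}{m}\hat r}$; $\sigma_{R-\hat R}(m,\delta,d,r,\hat r)=\min\{\hat\sigma_{R-\hat R}(m,\delta,d,\hat r),\bar\sigma_{R-\hat R}(m,\delta,d,r)\}$ and $\sigma_{\hat R-R}(m,\delta,d,r,\hat r)=\min\{\bar\sigma_{\hat R-R}(m,\delta,d,r),\hat\sigma_{\hat R-R}(m,\delta,d,\hat r)\}$. Event $\mathcal{E}$: for every $f\in\mathcal{F}$ simultaneously, $R(f)\le\hat R(f,S_m)+\sigma_{R-\hat R}(m,\delta,d,R(f),\hat R(f,S_m))$ and $\hat R(f,S_m)\le R(f)+\sigma_{\hat R-R}(m,\delta,d,R(f),\hat R(f,S_m))$; $\mathcal{E}$ has probability at least $1-\delta$. For $G\subseteq\mathcal{F}$, $DIS(G)=\{x:\exists f_1,f_2\in G,\ f_1(x)\neq f_2(x)\}$. ILESS on $(S_m,\delta,\mathcal{F},d)$: take an ERM $\hat f$; set $\sigma_{\rm ILESS}=\hat\sigma_{R-\hat R}(m,\delta,d,\hat R(\hat f,S_m))+\bar\sigma_{\hat R-R}\big(m,\delta,d,\hat R(\hat f,S_m)+\hat\sigma_{R-\hat R}(m,\delta,d,\hat R(\hat f,S_m))\big)$; set $G=\{f\in\mathcal{F}:\hat R(f,S_m)\le\hat R(\hat f,S_m)+\sigma_{\rm ILESS}\}$; output the selective classifier $(\hat f,g)$ with $g(x)=1$ iff $x\notin DIS(G)$. A selective classifier $(h,g)$ (with $h\in\mathcal F$, $g:\mathcal X\to\{0,1\}$; it predicts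 $h(x)$ if $g(x)=1$ and abstains otherwise) is pointwise-competitive if for every $x$ with $g(x)=1$, $h(x)=f^*(x)$ for all true risk minimizers $f^*$. *)

theory Defs
  imports "HOL-Probability.Probability"
begin

text \<open>Labels are integers restricted to {-1, 1}; hypotheses are maps 'x => int.\<close>

definition shatters :: "('x \<Rightarrow> int) set \<Rightarrow> 'x set \<Rightarrow> bool" where
  "shatters F C \<longleftrightarrow> (\<forall>B \<subseteq> C. \<exists>f\<in>F. \<forall>x\<in>C. (f x = 1 \<longleftrightarrow> x \<in> B))"

definition VC_dim_eq :: "('x \<Rightarrow> int) set \<Rightarrow> nat \<Rightarrow> bool" where
  "VC_dim_eq F d \<longleftrightarrow> (\<exists>C. finite C \<and> card C = d \<and> shatters F C) \<and>
      (\<forall>C. finite C \<and> shatters F C \<longrightarrow> card C \<le> d)"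

definition true_risk :: "('x \<times> int) measure \<Rightarrow> ('x \<Rightarrow> int) \<Rightarrow> real" where
  "true_risk M f = measure M {p \<in> space M. f (fst p) \<noteq> snd p}"

definition emp_risk :: "('x \<Rightarrow> int) \<Rightarrow> ('x \<times> int) list \<Rightarrow> real" where
  "emp_risk f S = (\<Sum>i<length S. if f (fst (S ! i)) \<noteq> snd (S ! i) then 1 else 0) / real (length S)"

definition is_ERM :: "('x \<Rightarrow> int) set \<Rightarrow> ('x \<times> int) list \<Rightarrow> ('x \<Rightarrow> int) \<Rightarrow> bool" where
  "is_ERM F S h \<longleftrightarrow> h \<in> F \<and> (\<forall>f\<in>F. emp_risk h S \<le> emp_risk f S)"

definition is_true_risk_minimizer ::
  "('x \<times> int) measure \<Rightarrow> ('x \<Rightarrow> int) set \<Rightarrow> ('x \<Rightarrow> int) \<Rightarrow> bool" where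
  "is_true_risk_minimizer M F h \<longleftrightarrow> h \<in> F \<and> (\<forall>f\<in>F. true_risk M h \<le> true_risk M f)"

definition slackA :: "nat \<Rightarrow> real \<Rightarrow> nat \<Rightarrow> real" where
  "slackA m \<delta> d = 4 * real d * ln (16 * real m * exp 1 / (real d * \<delta>))"

definition sig_hat_R_Rhat :: "nat \<Rightarrow> real \<Rightarrow> nat \<Rightarrow> real \<Rightarrow> real" where
  "sig_hat_R_Rhat m \<delta> d rh = slackA m \<delta> d / real m + sqrt (slackA m \<delta> d / real m * rh)"

definition sig_bar_R_Rhat :: "nat \<Rightarrow> real \<Rightarrow> nat \<Rightarrow> real \<Rightarrow> real" where
  "sig_bar_R_Rhat m \<delta> d r = sqrt (slackA m \<delta> d / real m * r)"

definition sig_bar_Rhat_R :: "nat \<Rightarrow> real \<Rightarrow> nat \<Rightarrow> real \<Rightarrow> real" where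
  "sig_bar_Rhat_R m \<delta> d r = slackA m \<delta> d / real m + sqrt (slackA m \<delta> d / real m * r)"

definition sig_hat_Rhat_R :: "nat \<Rightarrow> real \<Rightarrow> nat \<Rightarrow> real \<Rightarrow> real" where
  "sig_hat_Rhat_R m \<delta> d rh = sqrt (slackA m \<delta> d / real m * rh)"

definition sig_R_Rhat :: "nat \<Rightarrow> real \<Rightarrow> nat \<Rightarrow> real \<Rightarrow> real \<Rightarrow> real" where
  "sig_R_Rhat m \<delta> d r rh = min (sig_hat_R_Rhat m \<delta> d rh) (sig_bar_R_Rhat m \<delta> d r)"

definition sig_Rhat_R :: "nat \<Rightarrow> real \<Rightarrow> nat \<Rightarrow> real \<Rightarrow> real \<Rightarrow> real" where
  "sig_Rhat_R m \<delta> d r rh = min (sig_bar_Rhat_R m \<delta> d r) (sig_hat_Rhat_R m \<delta> d rh)"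

definition event_E ::
  "('x \<times> int) measure \<Rightarrow> ('x \<Rightarrow> int) set \<Rightarrow> nat \<Rightarrow> real \<Rightarrow> ('x \<times> int) list \<Rightarrow> bool" where
  "event_E M F d \<delta> S \<longleftrightarrow> (\<forall>f\<in>F.
      true_risk M f \<le> emp_risk f S + sig_R_Rhat (length S) \<delta> d (true_risk M f) (emp_risk f S) \<and>
      emp_risk f S \<le> true_risk M f + sig_Rhat_R (length S) \<delta> d (true_risk M f) (emp_risk f S))"

definition sigma_ILESS :: "nat \<Rightarrow> real \<Rightarrow> nat \<Rightarrow> real \<Rightarrow> real" where
  "sigma_ILESS m \<delta> d rh = sig_hat_R_Rhat m \<delta> d rh +
      sig_bar_Rhat_R m \<delta> d (rh + sig_hat_R_Rhat m \<delta> d rh)"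

definition ILESS_G ::
  "('x \<Rightarrow> int) set \<Rightarrow> nat \<Rightarrow> real \<Rightarrow> ('x \<times> int) list \<Rightarrow> ('x \<Rightarrow> int) \<Rightarrow> ('x \<Rightarrow> int) set" where
  "ILESS_G F d \<delta> S fh = {f \<in> F. emp_risk f S \<le> emp_risk fh S +
      sigma_ILESS (length S) \<delta> d (emp_risk fh S)}"

definition DIS :: "('x \<Rightarrow> int) set \<Rightarrow> 'x set" where
  "DIS G = {x. \<exists>f1\<in>G. \<exists>f2\<in>G. f1 x \<noteq> f2 x}"

definition ILESS_g ::
  "('x \<Rightarrow> int) set \<Rightarrow> nat \<Rightarrow> real \<Rightarrow> ('x \<times> int) list \<Rightarrow> ('x \<Rightarrow> int) \<Rightarrow> 'x \<Rightarrow> int" where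
  "ILESS_g F d \<delta> S fh x = (if x \<notin> DIS (ILESS_G F d \<delta> S fh) then 1 else 0)"

definition pointwise_competitive ::
  "('x \<times> int) measure \<Rightarrow> ('x \<Rightarrow> int) set \<Rightarrow> ('x \<Rightarrow> int) \<Rightarrow> ('x \<Rightarrow> int) \<Rightarrow> bool" where
  "pointwise_competitive M F h g \<longleftrightarrow>
     (\<forall>x. g x = 1 \<longrightarrow> (\<forall>fs. is_true_risk_minimizer M F fs \<longrightarrow> h x = fs x))"

end

theory Submission
  imports Defs
begin

text \<open>On the event E a true risk minimizer f* satisfies R(f*) \<le> R(fh) \<le> Rhat(fh) + \<sigma>hat(Rhat(fh)),
  and, since \<sigma>bar is monotone in the true risk, Rhat(f*) \<le> R(f*) + \<sigma>bar(R(f*)) is bounded by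
  Rhat(fh) + \<sigma>hat + \<sigma>bar(Rhat(fh) + \<sigma>hat), which is exactly the ILESS threshold. Hence f* and the ERM
  both lie in G, so they agree outside DIS(G).\<close>

lemma emp_risk_nonneg: "0 \<le> emp_risk f S"
  unfolding emp_risk_def by (intro divide_nonneg_nonneg sum_nonneg) auto

lemma true_risk_nonneg: "0 \<le> true_risk M f"
  unfolding true_risk_def by simp

lemma event_E_true_risk_le:
  assumes "event_E M F d \<delta> S" and "f \<in> F"
  shows "true_risk M f \<le> emp_risk f S + sig_hat_R_Rhat (length S) \<delta> d (emp_risk f S)"
  using assms unfolding event_E_def sig_R_Rhat_def by fastforce

lemma event_E_emp_risk_le:
  assumes "event_E M F d \<delta> S" and "f \<in> F"
  shows "emp_risk f S \<le> true_risk M f + sig_bar_Rhat_R (length S) \<delta> d (true_risk M f)"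
  using assms unfolding event_E_def sig_Rhat_R_def by fastforce

text \<open>The slack A need not be positive (e.g. when d is large compared to m); nonnegativity of
  A/m is instead forced by E holding for a single hypothesis, as the two deviation bounds
  would otherwise add up to 0 \<le> 2 A/m.\<close>

lemma event_E_slack_nonneg:
  assumes "event_E M F d \<delta> S" and "f \<in> F"
  shows "0 \<le> slackA (length S) \<delta> d / real (length S)"
proof (rule ccontr)
  define c where "c = slackA (length S) \<delta> d / real (length S)"
  assume "\<not> 0 \<le> slackA (length S) \<delta> d / real (length S)"
  then have "c < 0" unfolding c_def by simp
  then have "sqrt (c * emp_risk f S) \<le> 0" and "sqrt (c * true_risk M f) \<le> 0"
    using mult_nonpos_nonneg[of c] emp_risk_nonneg[of f S] true_risk_nonneg[of M f] by simp_all
  moreover have "true_risk M f \<le> emp_risk f S + (c + sqrt (c * emp_risk f S))"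
    using event_E_true_risk_le[OF assms] unfolding sig_hat_R_Rhat_def c_def .
  moreover have "emp_risk f S \<le> true_risk M f + (c + sqrt (c * true_risk M f))"
    using event_E_emp_risk_le[OF assms] unfolding sig_bar_Rhat_R_def c_def .
  ultimately show False using \<open>c < 0\<close> by linarith
qed

lemma sig_bar_Rhat_R_mono:
  assumes "0 \<le> slackA m \<delta> d / real m" and "r \<le> r'"
  shows "sig_bar_Rhat_R m \<delta> d r \<le> sig_bar_Rhat_R m \<delta> d r'"
  unfolding sig_bar_Rhat_R_def using assms mult_left_mono[OF assms(2,1)] by simp

lemma sigma_ILESS_nonneg:
  assumes "0 \<le> slackA m \<delta> d / real m" and "0 \<le> rh"
  shows "0 \<le> sigma_ILESS m \<delta> d rh"
proof -
  define c where "c = slackA m \<delta> d / real m"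
  have "0 \<le> c" using assms(1) unfolding c_def .
  then have "0 \<le> c + sqrt (c * rh)" using assms(2) by simp
  with \<open>0 \<le> c\<close> have "0 \<le> (c + sqrt (c * rh)) + (c + sqrt (c * (rh + (c + sqrt (c * rh)))))"
    using assms(2) by simp
  then show ?thesis unfolding sigma_ILESS_def sig_hat_R_Rhat_def sig_bar_Rhat_R_def c_def .
qed

lemma ERM_in_ILESS_G:
  assumes "is_ERM F S fh" and "event_E M F d \<delta> S"
  shows "fh \<in> ILESS_G F d \<delta> S fh"
proof -
  have "fh \<in> F" using assms(1) unfolding is_ERM_def by simp
  then have "0 \<le> sigma_ILESS (length S) \<delta> d (emp_risk fh S)"
    using sigma_ILESS_nonneg event_E_slack_nonneg[OF assms(2)] emp_risk_nonneg by blast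
  with \<open>fh \<in> F\<close> show ?thesis unfolding ILESS_G_def by simp
qed

lemma true_risk_minimizer_in_ILESS_G:
  assumes "is_ERM F S fh" and E: "event_E M F d \<delta> S" and "is_true_risk_minimizer M F fs"
  shows "fs \<in> ILESS_G F d \<delta> S fh"
proof -
  let ?m = "length S" and ?rh = "emp_risk fh S"
  let ?u = "?rh + sig_hat_R_Rhat ?m \<delta> d ?rh"
  have "fh \<in> F" using assms(1) unfolding is_ERM_def by simp
  have "fs \<in> F" and "true_risk M fs \<le> true_risk M fh"
    using assms(3) \<open>fh \<in> F\<close> unfolding is_true_risk_minimizer_def by auto
  note \<open>true_risk M fs \<le> true_risk M fh\<close>
  also have "true_risk M fh \<le> ?u"
    using event_E_true_risk_le[OF E \<open>fh \<in> F\<close>] .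
  finally have "true_risk M fs \<le> ?u" .
  have "emp_risk fs S \<le> true_risk M fs + sig_bar_Rhat_R ?m \<delta> d (true_risk M fs)"
    using event_E_emp_risk_le[OF E \<open>fs \<in> F\<close>] .
  also have "\<dots> \<le> ?u + sig_bar_Rhat_R ?m \<delta> d ?u"
    using \<open>true_risk M fs \<le> ?u\<close> sig_bar_Rhat_R_mono event_E_slack_nonneg[OF E \<open>fh \<in> F\<close>]
    by (simp add: add_mono)
  finally have "emp_risk fs S \<le> ?rh + sigma_ILESS ?m \<delta> d ?rh"
    unfolding sigma_ILESS_def by simp
  with \<open>fs \<in> F\<close> show ?thesis unfolding ILESS_G_def by simp
qed

lemma DIS_outside_eq: "f1 \<in> G \<Longrightarrow> f2 \<in> G \<Longrightarrow> x \<notin> DIS G \<Longrightarrow> f1 x = f2 x"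
  unfolding DIS_def by blast

lemma pointwise_competitive_ILESS_g:
  assumes "fh \<in> ILESS_G F d \<delta> S fh"
    and "\<And>fs. is_true_risk_minimizer M F fs \<Longrightarrow> fs \<in> ILESS_G F d \<delta> S fh"
  shows "pointwise_competitive M F fh (ILESS_g F d \<delta> S fh)"
  unfolding pointwise_competitive_def ILESS_g_def
  using assms DIS_outside_eq by (metis zero_neq_one)

theorem lemma3:
  fixes M :: "('x \<times> int) measure"
    and F :: "('x \<Rightarrow> int) set"
    and d :: nat and \<delta> :: real
    and S :: "('x \<times> int) list"
    and fh :: "'x \<Rightarrow> int"
  assumes "prob_space M"
    and "space M \<subseteq> UNIV \<times> {-1, 1}"
    and "\<forall>f\<in>F. \<forall>x. f x \<in> {-1, 1}"
    and "\<forall>f\<in>F. {p \<in> space M. f (fst p) \<noteq> snd p} \<in> sets M"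
    and "VC_dim_eq F d"
    and "length S > 0"
    and "set S \<subseteq> space M"
    and "0 < \<delta>" and "\<delta> < 1"
    and "\<exists>fs. is_true_risk_minimizer M F fs"
    and "is_ERM F S fh"
    and "event_E M F d \<delta> S"
  shows "(\<forall>fs. is_true_risk_minimizer M F fs \<longrightarrow> fs \<in> ILESS_G F d \<delta> S fh)
       \<and> pointwise_competitive M F fh (ILESS_g F d \<delta> S fh)"
  using true_risk_minimizer_in_ILESS_G[OF assms(11,12)] ERM_in_ILESS_G[OF assms(11,12)]
    pointwise_competitive_ILESS_g
  by blast

end
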